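(* Let $\Omega\subset\mathbb{R}^N$ ($N\ge2$) be a bounded smooth domain, $1<q<2<p$ with $p<\frac{2N}{N-2}$ if $N\ge3$, $a,b\in C^\alpha(\overline\Omega)$, and assume $\int_\Omega a<0$ or $\int_\Omega b<0$. Then for $0<\lambda<\lambda_0$ we have $I_\lambda(u)>0$ for every $u\in N_\lambda^-$.
   Context: $E(u)=\int_\Omega|\nabla u|^2$, $A(u)=\int_\Omega a|u|^p$, $B(u)=\int_\Omega b|u|^q$ on $H^1(\Omega)$; $I_\lambda=\frac12E-\frac1pA-\frac\lambda qB$. $N_\lambda=\{u\ne0:E(u)=A(u)+\lambda B(u)\}$, $N_\lambda^-=\{u\in N_\lambda:E(u)>\lambda\frac{p-q}{p-2}B(u)\}$. $C_{pq}=\frac{q(p-2)}{2(p-q)}\left(\frac{p(2-q)}{2(p-q)}\right)^{\frac{2-q}{p-2}}$, $\lambda_0=\inf\{E(u)^{\frac{p-q}{p-2}}:E(u)>0,A(u)>0,B(u)>0,\ C_{pq}^{-1}B(u)A(u)^{\frac{2-q}{p-2}}=1\}$ ($\inf\emptyset=\infty$). *)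

theory Defs
  imports "HOL-Analysis.Analysis"
begin

definition pd :: "'n::finite \<Rightarrow> (real^'n \<Rightarrow> real) \<Rightarrow> real^'n \<Rightarrow> real" where
  "pd i f x = (THE d. ((\<lambda>t. f (x + t *\<^sub>R axis i 1)) has_real_derivative d) (at 0))"

primrec Ck :: "nat \<Rightarrow> (real^'n::finite \<Rightarrow> real) \<Rightarrow> (real^'n) set \<Rightarrow> bool" where
  "Ck 0 f U = continuous_on U f"
| "Ck (Suc k) f U = (continuous_on U f \<and>
     (\<forall>i. \<forall>x\<in>U. ((\<lambda>t. f (x + t *\<^sub>R axis i 1)) has_real_derivative pd i f x) (at 0)) \<and>
     (\<forall>i. Ck k (pd i f) U))"

definition Cinf :: "(real^'n::finite \<Rightarrow> real) \<Rightarrow> (real^'n) set \<Rightarrow> bool" where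
  "Cinf f U = (\<forall>k. Ck k f U)"

definition smooth_boundary :: "(real^'n::finite) set \<Rightarrow> bool" where
  "smooth_boundary \<Omega> = (\<forall>x0\<in>frontier \<Omega>. \<exists>r>0. \<exists>(T::real^'n \<Rightarrow> real^'n) (k::'n) (\<gamma>::real^'n \<Rightarrow> real).
      orthogonal_transformation T \<and> Cinf \<gamma> UNIV \<and>
      (\<forall>y z. (\<forall>j. j \<noteq> k \<longrightarrow> y $ j = z $ j) \<longrightarrow> \<gamma> y = \<gamma> z) \<and>
      \<Omega> \<inter> ball x0 r = {x \<in> ball x0 r. \<gamma> (T x) < (T x) $ k})"

definition smooth_bounded_domain :: "(real^'n::finite) set \<Rightarrow> bool" where
  "smooth_bounded_domain \<Omega> = (open \<Omega> \<and> connected \<Omega> \<and> \<Omega> \<noteq> {} \<and> bounded \<Omega> \<and> smooth_boundary \<Omega>)"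

definition holder_on :: "real \<Rightarrow> (real^'n::finite) set \<Rightarrow> (real^'n \<Rightarrow> real) \<Rightarrow> bool" where
  "holder_on \<alpha> S f = (continuous_on S f \<and>
     (\<exists>C. \<forall>x\<in>S. \<forall>y\<in>S. \<bar>f x - f y\<bar> \<le> C * dist x y powr \<alpha>))"

definition test_fun :: "(real^'n::finite) set \<Rightarrow> (real^'n \<Rightarrow> real) \<Rightarrow> bool" where
  "test_fun \<Omega> \<phi> = (Cinf \<phi> UNIV \<and> compact (closure {x. \<phi> x \<noteq> 0}) \<and> closure {x. \<phi> x \<noteq> 0} \<subseteq> \<Omega>)"

definition weak_grad :: "(real^'n::finite) set \<Rightarrow> (real^'n \<Rightarrow> real) \<Rightarrow> (real^'n \<Rightarrow> real^'n) \<Rightarrow> bool" where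
  "weak_grad \<Omega> u g = (\<forall>i.
      (\<lambda>x. g x $ i) \<in> borel_measurable (lebesgue_on \<Omega>) \<and>
      integrable (lebesgue_on \<Omega>) (\<lambda>x. (g x $ i)\<^sup>2) \<and>
      (\<forall>\<phi>. test_fun \<Omega> \<phi> \<longrightarrow>
         (LINT x|lebesgue_on \<Omega>. u x * pd i \<phi> x) = - (LINT x|lebesgue_on \<Omega>. g x $ i * \<phi> x)))"

definition H1 :: "(real^'n::finite) set \<Rightarrow> (real^'n \<Rightarrow> real) set" where
  "H1 \<Omega> = {u. u \<in> borel_measurable (lebesgue_on \<Omega>) \<and>
              integrable (lebesgue_on \<Omega>) (\<lambda>x. (u x)\<^sup>2) \<and> (\<exists>g. weak_grad \<Omega> u g)}"

definition grad :: "(real^'n::finite) set \<Rightarrow> (real^'n \<Rightarrow> real) \<Rightarrow> real^'n \<Rightarrow> real^'n" where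
  "grad \<Omega> u = (SOME g. weak_grad \<Omega> u g)"

definition EE :: "(real^'n::finite) set \<Rightarrow> (real^'n \<Rightarrow> real) \<Rightarrow> real" where
  "EE \<Omega> u = (LINT x|lebesgue_on \<Omega>. (norm (grad \<Omega> u x))\<^sup>2)"

definition AA :: "(real^'n::finite) set \<Rightarrow> (real^'n \<Rightarrow> real) \<Rightarrow> real \<Rightarrow> (real^'n \<Rightarrow> real) \<Rightarrow> real" where
  "AA \<Omega> a p u = (LINT x|lebesgue_on \<Omega>. a x * \<bar>u x\<bar> powr p)"

definition BB :: "(real^'n::finite) set \<Rightarrow> (real^'n \<Rightarrow> real) \<Rightarrow> real \<Rightarrow> (real^'n \<Rightarrow> real) \<Rightarrow> real" where
  "BB \<Omega> b q u = (LINT x|lebesgue_on \<Omega>. b x * \<bar>u x\<bar> powr q)"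

definition II :: "(real^'n::finite) set \<Rightarrow> (real^'n \<Rightarrow> real) \<Rightarrow> (real^'n \<Rightarrow> real) \<Rightarrow> real \<Rightarrow> real \<Rightarrow> real
                  \<Rightarrow> (real^'n \<Rightarrow> real) \<Rightarrow> real" where
  "II \<Omega> a b p q lam u = EE \<Omega> u / 2 - AA \<Omega> a p u / p - lam / q * BB \<Omega> b q u"

text \<open>u is nonzero as an element of H^1, i.e. not a.e. zero on Omega.\<close>
definition Nehari :: "(real^'n::finite) set \<Rightarrow> (real^'n \<Rightarrow> real) \<Rightarrow> (real^'n \<Rightarrow> real) \<Rightarrow> real \<Rightarrow> real \<Rightarrow> real
                  \<Rightarrow> (real^'n \<Rightarrow> real) set" where
  "Nehari \<Omega> a b p q lam = {u \<in> H1 \<Omega>. \<not> (AE x in lebesgue_on \<Omega>. u x = 0) \<and>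
        EE \<Omega> u = AA \<Omega> a p u + lam * BB \<Omega> b q u}"

definition Nehari_minus :: "(real^'n::finite) set \<Rightarrow> (real^'n \<Rightarrow> real) \<Rightarrow> (real^'n \<Rightarrow> real) \<Rightarrow> real \<Rightarrow> real \<Rightarrow> real
                  \<Rightarrow> (real^'n \<Rightarrow> real) set" where
  "Nehari_minus \<Omega> a b p q lam = {u \<in> Nehari \<Omega> a b p q lam.
        EE \<Omega> u > lam * (p - q) / (p - 2) * BB \<Omega> b q u}"

definition Cpq :: "real \<Rightarrow> real \<Rightarrow> real" where
  "Cpq p q = q * (p - 2) / (2 * (p - q)) * (p * (2 - q) / (2 * (p - q))) powr ((2 - q) / (p - 2))"

text \<open>lambda_0 as an extended real; Inf of the empty set is infinity.\<close>
definition lambda0 :: "(real^'n::finite) set \<Rightarrow> (real^'n \<Rightarrow> real) \<Rightarrow> (real^'n \<Rightarrow> real) \<Rightarrow> real \<Rightarrow> real \<Rightarrow> ereal" where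
  "lambda0 \<Omega> a b p q = Inf {ereal (EE \<Omega> u powr ((p - q) / (p - 2))) | u.
        u \<in> H1 \<Omega> \<and> EE \<Omega> u > 0 \<and> AA \<Omega> a p u > 0 \<and> BB \<Omega> b q u > 0 \<and>
        BB \<Omega> b q u * AA \<Omega> a p u powr ((2 - q) / (p - 2)) / Cpq p q = 1}"

end

theory Submission
  imports Defs "HOL-Computational_Algebra.Polynomial" "HOL-Real_Asymp.Real_Asymp"
begin

text \<open>
  On the Nehari manifold the functional reduces to
  \<open>I\<^sub>\<lambda>(u) = ((p - 2) E(u) - 2 \<lambda> (p - q)/q B(u)) / (2p)\<close>, which is positive as soon as
  \<open>B(u) \<le> 0\<close>.  If \<open>B(u) > 0\<close> and \<open>I\<^sub>\<lambda>(u) \<le> 0\<close>, the two constraints pin the ratio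
  \<open>\<lambda> B(u) / E(u)\<close> to the interval where \<open>y (1 - y)\<^sup>r\<close>, \<open>r = (2 - q)/(p - 2)\<close>, is increasing,
  which gives \<open>C\<^sub>p\<^sub>q E(u)\<^sup>1\<^sup>+\<^sup>r \<le> \<lambda> B(u) A(u)\<^sup>r\<close>.  Rescaling \<open>u\<close> onto the constraint set defining
  \<open>\<lambda>\<^sub>0\<close> then yields \<open>\<lambda>\<^sub>0 \<le> \<lambda>\<close>, using that \<open>E\<close> is 2-homogeneous.  That homogeneity is
  the only analytic input: it needs the weak gradient to be unique almost everywhere,
  i.e. the fundamental lemma of the calculus of variations, for which we build
  \<open>C\<^sup>\<infinity>\<close> bumps approximating the indicator of a box.
\<close>

definition exp_bump_term :: "real poly \<Rightarrow> real poly \<Rightarrow> nat \<Rightarrow> real \<Rightarrow> real" where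
  "exp_bump_term Q P m s =
     (if poly Q s > 0 then poly P s / poly Q s ^ m * exp (- 1 / poly Q s) else 0)"

definition exp_bump_deriv_poly :: "real poly \<Rightarrow> real poly \<Rightarrow> nat \<Rightarrow> real poly" where
  "exp_bump_deriv_poly Q P m =
     pderiv P * Q\<^sup>2 - smult (of_nat m) (P * pderiv Q * Q) + P * pderiv Q"

definition exp_inv_div_power :: "nat \<Rightarrow> real \<Rightarrow> real" where
  "exp_inv_div_power m w = (if w > 0 then exp (- 1 / w) / w ^ (m + 1) else 0)"

lemma tendsto_exp_inv_div_power: "(exp_inv_div_power m \<longlongrightarrow> 0) (at 0)"
proof (rule filterlim_split_at)
  show "(exp_inv_div_power m \<longlongrightarrow> 0) (at_left 0)"
    by (rule tendsto_eventually)
      (auto simp: exp_inv_div_power_def eventually_at_left_field intro: exI[of _ "-1"])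
  have "((\<lambda>w. exp (- 1 / w) / w ^ (m + 1)) \<longlongrightarrow> 0) (at_right (0::real))"
    by real_asymp
  then show "(exp_inv_div_power m \<longlongrightarrow> 0) (at_right 0)"
    by (rule Lim_transform_eventually)
      (auto simp: exp_inv_div_power_def eventually_at_right_field intro: exI[of _ "1"])
qed

lemma exp_bump_term_deriv_pos:
  assumes "poly Q s > 0"
  shows "(exp_bump_term Q P m has_real_derivative
           exp_bump_term Q (exp_bump_deriv_poly Q P m) (m + 2) s) (at s)"
proof -
  let ?F = "\<lambda>y. poly P y / poly Q y ^ m * exp (- 1 / poly Q y)"
  have "(?F has_real_derivative exp_bump_term Q (exp_bump_deriv_poly Q P m) (m + 2) s) (at s)"
    using assms
    apply (simp add: exp_bump_term_def exp_bump_deriv_poly_def)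
    apply (rule derivative_eq_intros refl | simp)+
    apply (cases m)
     apply (simp_all add: field_simps power2_eq_square)
    done
  then show ?thesis
    by (rule has_field_derivative_transform_within_open[of _ _ _ "{y. poly Q y > 0}"])
      (use assms in \<open>auto simp: exp_bump_term_def intro!: open_Collect_less continuous_intros\<close>)
qed

lemma exp_bump_term_deriv_neg:
  assumes "poly Q s < 0"
  shows "(exp_bump_term Q P m has_real_derivative exp_bump_term Q P' m' s) (at s)"
proof -
  have "(exp_bump_term Q P m has_real_derivative 0) (at s)"
    by (rule has_field_derivative_transform_within_open[of "\<lambda>_. 0" _ _ "{y. poly Q y < 0}"])
      (use assms in \<open>auto simp: exp_bump_term_def intro!: open_Collect_less continuous_intros\<close>)
  then show ?thesis
    using assms by (simp add: exp_bump_term_def)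
qed

lemma eventually_abs_poly_div_le:
  fixes Q :: "real poly"
  assumes "poly Q s = 0"
  shows "eventually (\<lambda>y. \<bar>poly Q y\<bar> / \<bar>y - s\<bar> \<le> \<bar>poly (pderiv Q) s\<bar> + 1) (at s)"
proof -
  have "((\<lambda>y. (poly Q y - poly Q s) / (y - s)) \<longlongrightarrow> poly (pderiv Q) s) (at s)"
    using poly_DERIV[of Q s] by (simp add: has_field_derivative_iff)
  then have "eventually (\<lambda>y. dist ((poly Q y - poly Q s) / (y - s)) (poly (pderiv Q) s) < 1) (at s)"
    by (rule tendstoD) simp
  then show ?thesis
  proof eventually_elim
    case (elim y)
    then have "\<bar>poly Q y / (y - s) - poly (pderiv Q) s\<bar> < 1"
      by (simp add: dist_real_def assms)
    then show ?case
      unfolding abs_divide[symmetric] by linarith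
  qed
qed

lemma eventually_abs_poly_le:
  fixes P :: "real poly"
  shows "eventually (\<lambda>y. \<bar>poly P y\<bar> \<le> \<bar>poly P s\<bar> + 1) (at s)"
proof -
  have "eventually (\<lambda>y. dist (poly P y) (poly P s) < 1) (at s)"
    by (rule tendstoD[OF isCont_tendsto_compose[OF poly_isCont tendsto_ident_at]]) simp
  then show ?thesis
    by eventually_elim (auto simp: dist_real_def)
qed

lemma exp_bump_term_diff_quotient_bound:
  assumes "poly Q s = 0"
  obtains C where "C \<ge> 0"
    "eventually (\<lambda>y. \<bar>exp_bump_term Q P m y / (y - s)\<bar> \<le> C * exp_inv_div_power m (poly Q y)) (at s)"
proof -
  define K where "K = \<bar>poly (pderiv Q) s\<bar> + 1"
  define M where "M = \<bar>poly P s\<bar> + 1"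
  have evK: "eventually (\<lambda>y. \<bar>poly Q y\<bar> / \<bar>y - s\<bar> \<le> K) (at s)"
    unfolding K_def using assms by (rule eventually_abs_poly_div_le)
  have evM: "eventually (\<lambda>y. \<bar>poly P y\<bar> \<le> M) (at s)"
    unfolding M_def by (rule eventually_abs_poly_le)
  have "eventually (\<lambda>y. y \<noteq> s) (at s)"
    by (simp add: eventually_at_filter)
  with evK evM
  have "eventually (\<lambda>y. \<bar>exp_bump_term Q P m y / (y - s)\<bar> \<le> M * K * exp_inv_div_power m (poly Q y)) (at s)"
  proof eventually_elim
    case (elim y)
    show ?case
    proof (cases "poly Q y > 0")
      case False
      then show ?thesis
        by (simp add: exp_bump_term_def exp_inv_div_power_def)
    next
      case True
      define w where "w = poly Q y"
      have w: "w > 0" and ys: "\<bar>y - s\<bar> > 0"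
        using True elim by (auto simp: w_def)
      have inv: "1 / \<bar>y - s\<bar> \<le> K / w"
        using elim(1) w ys by (simp add: w_def field_simps)
      have "\<bar>exp_bump_term Q P m y / (y - s)\<bar> = \<bar>poly P y\<bar> * (exp (- 1 / w) / w ^ m) * (1 / \<bar>y - s\<bar>)"
        using w by (simp add: exp_bump_term_def w_def abs_divide abs_mult)
      also have "\<dots> \<le> M * (exp (- 1 / w) / w ^ m) * (K / w)"
        by (intro mult_mono inv elim(2)) (use w in \<open>auto simp: K_def M_def\<close>)
      also have "\<dots> = M * K * exp_inv_div_power m (poly Q y)"
        using w by (simp add: exp_inv_div_power_def w_def[symmetric] field_simps)
      finally show ?thesis .
    qed
  qed
  then show thesis
    by (rule that[rotated]) (simp add: M_def K_def)
qed

lemma exp_bump_term_deriv_zero: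
  assumes "poly Q s = 0"
  shows "(exp_bump_term Q P m has_real_derivative exp_bump_term Q P' m' s) (at s)"
proof -
  obtain C where "C \<ge> 0" and bound:
    "eventually (\<lambda>y. \<bar>exp_bump_term Q P m y / (y - s)\<bar> \<le> C * exp_inv_div_power m (poly Q y)) (at s)"
    using exp_bump_term_diff_quotient_bound[OF assms] .
  have "isCont (exp_inv_div_power m) 0"
    using tendsto_exp_inv_div_power by (simp add: isCont_def exp_inv_div_power_def)
  moreover have "((\<lambda>y. poly Q y) \<longlongrightarrow> 0) (at s)"
    using assms by (metis isCont_def poly_isCont)
  ultimately have "((\<lambda>y. exp_inv_div_power m (poly Q y)) \<longlongrightarrow> exp_inv_div_power m 0) (at s)"
    by (rule isCont_tendsto_compose)
  then have "((\<lambda>y. C * exp_inv_div_power m (poly Q y)) \<longlongrightarrow> 0) (at s)"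
    by (intro tendsto_mult_right_zero) (simp add: exp_inv_div_power_def)
  with bound have "((\<lambda>y. exp_bump_term Q P m y / (y - s)) \<longlongrightarrow> 0) (at s)"
    unfolding real_norm_def[symmetric] by (rule Lim_null_comparison)
  moreover have "exp_bump_term Q P m s = 0" "exp_bump_term Q P' m' s = 0"
    using assms by (auto simp: exp_bump_term_def)
  ultimately show ?thesis
    by (simp add: has_field_derivative_iff)
qed

lemma exp_bump_term_deriv:
  "(exp_bump_term Q P m has_real_derivative
     exp_bump_term Q (exp_bump_deriv_poly Q P m) (m + 2) s) (at s)"
proof (cases "poly Q s" "0::real" rule: linorder_cases)
  case less
  then show ?thesis
    by (rule exp_bump_term_deriv_neg)
next
  case equal
  then show ?thesis
    by (rule exp_bump_term_deriv_zero)
next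
  case greater
  then show ?thesis
    by (rule exp_bump_term_deriv_pos)
qed

text \<open>
  Every derivative of \<open>exp (-1 / Q)\<close>, cut off by \<open>0\<close> where \<open>Q \<le> 0\<close>, is again of the
  form \<open>exp_bump_term Q P m\<close>; \<open>exp_bump_data Q n\<close> records \<open>(P, m)\<close> for the \<open>n\<close>-th one.
\<close>

fun exp_bump_data :: "real poly \<Rightarrow> nat \<Rightarrow> real poly \<times> nat" where
  "exp_bump_data Q 0 = (1, 0)"
| "exp_bump_data Q (Suc n) =
     (exp_bump_deriv_poly Q (fst (exp_bump_data Q n)) (snd (exp_bump_data Q n)),
      snd (exp_bump_data Q n) + 2)"

definition exp_bump :: "real poly \<Rightarrow> nat \<Rightarrow> real \<Rightarrow> real" where
  "exp_bump Q n = exp_bump_term Q (fst (exp_bump_data Q n)) (snd (exp_bump_data Q n))"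

lemma exp_bump_deriv: "(exp_bump Q n has_real_derivative exp_bump Q (Suc n) s) (at s)"
  unfolding exp_bump_def using exp_bump_term_deriv by simp

lemma exp_bump_0: "exp_bump Q 0 s = (if poly Q s > 0 then exp (- 1 / poly Q s) else 0)"
  by (simp add: exp_bump_def exp_bump_term_def)

lemma has_real_derivative_prod_components_axis:
  fixes D :: "'n::finite \<Rightarrow> nat \<Rightarrow> real \<Rightarrow> real" and x :: "real^'n"
  assumes D: "\<And>j n s. (D j n has_real_derivative D j (Suc n) s) (at s)"
  shows "((\<lambda>t. \<Prod>j\<in>UNIV. D j (\<kappa> j) ((x + t *\<^sub>R axis i 1) $ j)) has_real_derivative
           (\<Prod>j\<in>UNIV. D j ((\<kappa>(i := Suc (\<kappa> i))) j) (x $ j))) (at 0)"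
proof -
  have eq: "(\<lambda>t. \<Prod>j\<in>UNIV. D j (\<kappa> j) ((x + t *\<^sub>R axis i 1) $ j))
     = (\<lambda>t. D i (\<kappa> i) (x $ i + t) * (\<Prod>j\<in>UNIV - {i}. D j (\<kappa> j) (x $ j)))"
    by (rule ext, subst prod.remove[of _ i]) (auto simp: axis_def intro!: prod.cong)
  have eq': "(\<Prod>j\<in>UNIV. D j ((\<kappa>(i := Suc (\<kappa> i))) j) (x $ j))
     = D i (Suc (\<kappa> i)) (x $ i) * (\<Prod>j\<in>UNIV - {i}. D j (\<kappa> j) (x $ j))"
    by (subst prod.remove[of _ i]) (auto intro!: prod.cong)
  have "((\<lambda>t. x $ i + t) has_real_derivative 1) (at 0)"
    by (auto intro!: derivative_eq_intros)
  from DERIV_chain2[of "D i (\<kappa> i)" _ "\<lambda>t. x $ i + t" 0, OF _ this]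
  have "((\<lambda>t. D i (\<kappa> i) (x $ i + t)) has_real_derivative D i (Suc (\<kappa> i)) (x $ i)) (at 0)"
    using D[of i "\<kappa> i" "x $ i"] by simp
  then show ?thesis
    unfolding eq eq' by (auto intro!: derivative_eq_intros)
qed

lemma Ck_prod_components:
  fixes D :: "'n::finite \<Rightarrow> nat \<Rightarrow> real \<Rightarrow> real"
  assumes D: "\<And>j n s. (D j n has_real_derivative D j (Suc n) s) (at s)"
  shows "Ck k (\<lambda>x::real^'n. \<Prod>j\<in>UNIV. D j (\<kappa> j) (x $ j)) UNIV"
proof (induction k arbitrary: \<kappa>)
  have cont: "continuous_on UNIV (\<lambda>x::real^'n. \<Prod>j\<in>UNIV. D j (\<kappa> j) (x $ j))" for \<kappa>
  proof -
    have "isCont (D j n) s" for j n s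
      using D DERIV_isCont by blast
    then have "isCont (\<lambda>x::real^'n. D j n (x $ j)) x" for j n x
      using continuous_at_compose[of x "\<lambda>x::real^'n. x $ j" "D j n"]
      by (auto simp: o_def intro: continuous_intros)
    then show ?thesis
      by (intro continuous_at_imp_continuous_on ballI continuous_intros) auto
  qed
  {
    case 0
    then show ?case
      using cont by simp
  }
  {
    case (Suc k)
    note deriv = has_real_derivative_prod_components_axis[of D \<kappa>, OF D]
    have pd_eq: "pd i (\<lambda>x::real^'n. \<Prod>j\<in>UNIV. D j (\<kappa> j) (x $ j))
        = (\<lambda>x. \<Prod>j\<in>UNIV. D j ((\<kappa>(i := Suc (\<kappa> i))) j) (x $ j))" for i
    proof
      fix x
      show "pd i (\<lambda>x::real^'n. \<Prod>j\<in>UNIV. D j (\<kappa> j) (x $ j)) x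
          = (\<Prod>j\<in>UNIV. D j ((\<kappa>(i := Suc (\<kappa> i))) j) (x $ j))"
        unfolding pd_def by (rule the_equality) (use deriv[of x i] DERIV_unique in auto)
    qed
    show ?case
      using cont deriv Suc.IH by (simp add: pd_eq)
  }
qed

text \<open>The factor \<open>n + 1\<close> makes \<open>exp (-1 / Q)\<close> tend to the indicator of \<open>]c, d[\<close> as \<open>n \<rightarrow> \<infinity>\<close>.\<close>

definition interval_poly :: "nat \<Rightarrow> real \<Rightarrow> real \<Rightarrow> real poly" where
  "interval_poly n c d = [: - real (Suc n) * c * d, real (Suc n) * (c + d), - real (Suc n) :]"

lemma poly_interval_poly: "poly (interval_poly n c d) s = real (Suc n) * ((s - c) * (d - s))"
  by (simp add: interval_poly_def algebra_simps)

lemma poly_interval_poly_pos_iff: "c < d \<Longrightarrow> 0 < poly (interval_poly n c d) s \<longleftrightarrow> c < s \<and> s < d"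
  unfolding poly_interval_poly zero_less_mult_iff by (auto simp: not_less)

definition box_bump :: "nat \<Rightarrow> real^'n::finite \<Rightarrow> real^'n \<Rightarrow> real^'n \<Rightarrow> real" where
  "box_bump n c d x = (\<Prod>j\<in>UNIV. exp_bump (interval_poly n (c $ j) (d $ j)) 0 (x $ j))"

lemma Cinf_box_bump: "Cinf (box_bump n c d) UNIV"
  unfolding Cinf_def box_bump_def
  using Ck_prod_components[of "\<lambda>j. exp_bump (interval_poly n (c $ j) (d $ j))" _ "\<lambda>_. 0"]
    exp_bump_deriv by blast

lemma box_bump_nonzero_iff:
  assumes "\<forall>j. c $ j < d $ j"
  shows "{x. box_bump n c d x \<noteq> 0} = box c d"
  using assms
  by (auto simp: box_bump_def exp_bump_0 poly_interval_poly_pos_iff mem_box_cart split: if_splits)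

lemma box_bump_bounds: "0 \<le> box_bump n c d x" "box_bump n c d x \<le> 1"
  unfolding box_bump_def by (auto simp: exp_bump_0 intro!: prod_le_1 prod_nonneg)

lemma box_bump_tendsto_indicator:
  fixes c d x :: "real^'n::finite"
  assumes "\<forall>j. c $ j < d $ j"
  shows "(\<lambda>n. box_bump n c d x) \<longlonglongrightarrow> indicator (box c d) x"
proof (cases "x \<in> box c d")
  case True
  have "(\<lambda>n. exp_bump (interval_poly n (c $ j) (d $ j)) 0 (x $ j)) \<longlonglongrightarrow> 1" for j
  proof -
    define \<delta> where "\<delta> = (x $ j - c $ j) * (d $ j - x $ j)"
    have \<delta>: "\<delta> > 0"
      using True by (simp add: \<delta>_def mem_box_cart)
    have "exp_bump (interval_poly n (c $ j) (d $ j)) 0 (x $ j) = exp (- (1 / \<delta>) * inverse (real (Suc n)))" for n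
    proof -
      have "- 1 / (real (Suc n) * \<delta>) = - (1 / \<delta>) * inverse (real (Suc n))"
        by (simp add: field_simps)
      then show ?thesis
        using \<delta> by (simp add: exp_bump_0 poly_interval_poly \<delta>_def[symmetric] del: of_nat_Suc)
    qed
    moreover have "(\<lambda>n. exp (- (1 / \<delta>) * inverse (real (Suc n)))) \<longlonglongrightarrow> exp (- (1 / \<delta>) * 0)"
      by (intro tendsto_intros LIMSEQ_inverse_real_of_nat)
    ultimately show ?thesis
      by simp
  qed
  then have "(\<lambda>n. box_bump n c d x) \<longlonglongrightarrow> (\<Prod>j\<in>(UNIV::'n set). 1)"
    unfolding box_bump_def by (intro tendsto_prod) auto
  then show ?thesis
    using True by simp
next
  case False
  then obtain j where "\<not> (c $ j < x $ j \<and> x $ j < d $ j)"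
    by (auto simp: mem_box_cart)
  then have "box_bump n c d x = 0" for n
    using assms unfolding box_bump_def
    by (intro prod_zero) (auto simp: exp_bump_0 poly_interval_poly_pos_iff)
  then show ?thesis
    using False by simp
qed

lemma test_fun_box_bump:
  assumes "\<forall>j. c $ j < d $ j" "cbox c d \<subseteq> \<Omega>"
  shows "test_fun \<Omega> (box_bump n c d)"
proof -
  have "(1/2) *\<^sub>R (c + d) \<in> box c d"
    using assms(1) by (auto simp: mem_box_cart)
  then have "box c d \<noteq> {}"
    by auto
  then show ?thesis
    unfolding test_fun_def using Cinf_box_bump box_bump_nonzero_iff[OF assms(1)] assms(2)
    by (auto simp: closure_box)
qed

lemma continuous_on_Cinf: "Cinf f U \<Longrightarrow> continuous_on U f"
  unfolding Cinf_def by (metis Ck.simps(1))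

lemma box_bump_measurable: "box_bump n c d \<in> borel_measurable lebesgue"
proof -
  have "box_bump n c d \<in> borel_measurable borel"
    using continuous_on_Cinf[OF Cinf_box_bump] by (rule borel_measurable_continuous_onI)
  then show ?thesis
    by (simp add: measurable_completion)
qed

lemma integral_indicator_box_eq_0_if_orthogonal_test_funs:
  fixes f :: "real^'n::finite \<Rightarrow> real"
  assumes f: "integrable lebesgue f"
    and orth: "\<And>\<phi>. test_fun \<Omega> \<phi> \<Longrightarrow> (\<forall>x. \<bar>\<phi> x\<bar> \<le> 1) \<Longrightarrow> (LINT x|lebesgue. f x * \<phi> x) = 0"
    and cd: "\<forall>j. c $ j < d $ j" "cbox c d \<subseteq> \<Omega>"
  shows "(LINT x|lebesgue. f x * indicator (box c d) x) = 0"
proof -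
  have fm: "f \<in> borel_measurable lebesgue"
    using f by (rule borel_measurable_integrable)
  have "(\<lambda>n. LINT x|lebesgue. f x * box_bump n c d x) \<longlonglongrightarrow> (LINT x|lebesgue. f x * indicator (box c d) x)"
  proof (rule integral_dominated_convergence[where w="\<lambda>x. \<bar>f x\<bar>"])
    show "(\<lambda>x. f x * indicator (box c d) x) \<in> borel_measurable lebesgue"
      using fm by (intro borel_measurable_times borel_measurable_indicator) (auto simp: measurable_completion)
    show "(\<lambda>x. f x * box_bump n c d x) \<in> borel_measurable lebesgue" for n
      using fm box_bump_measurable by (intro borel_measurable_times) auto
    show "AE x in lebesgue. (\<lambda>n. f x * box_bump n c d x) \<longlonglongrightarrow> f x * indicator (box c d) x"
      using box_bump_tendsto_indicator[OF cd(1)] by (auto intro!: tendsto_mult)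
    show "AE x in lebesgue. norm (f x * box_bump n c d x) \<le> \<bar>f x\<bar>" for n
      using box_bump_bounds[of n c d] by (auto simp: abs_mult intro!: mult_left_le)
  qed (use f in auto)
  moreover have "(LINT x|lebesgue. f x * box_bump n c d x) = 0" for n
  proof -
    have "\<bar>box_bump n c d x\<bar> \<le> 1" for x
      using box_bump_bounds[of n c d x] by linarith
    then show ?thesis
      using orth[OF test_fun_box_bump[OF cd]] by blast
  qed
  ultimately have "(\<lambda>n. 0) \<longlonglongrightarrow> (LINT x|lebesgue. f x * indicator (box c d) x)"
    by simp
  then show ?thesis
    using LIMSEQ_unique tendsto_const by blast
qed

lemma integral_cbox_eq_0_if_orthogonal_test_funs:
  fixes f :: "real^'n::finite \<Rightarrow> real"
  assumes f: "integrable lebesgue f"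
    and orth: "\<And>\<phi>. test_fun \<Omega> \<phi> \<Longrightarrow> (\<forall>x. \<bar>\<phi> x\<bar> \<le> 1) \<Longrightarrow> (LINT x|lebesgue. f x * \<phi> x) = 0"
    and cd: "\<forall>j. c $ j < d $ j" "cbox c d \<subseteq> \<Omega>"
  shows "integral (cbox c d) f = 0"
proof -
  have fm: "f \<in> borel_measurable lebesgue"
    using f by (rule borel_measurable_integrable)
  have f_cbox: "f absolutely_integrable_on cbox c d"
    unfolding absolutely_integrable_on_def set_integrable_def
    using integrable_mult_indicator[OF _ f] by simp
  have "integral (cbox c d) f = (LINT x|lebesgue. indicator (cbox c d) x *\<^sub>R f x)"
    using set_lebesgue_integral_eq_integral(2)[OF f_cbox] unfolding set_lebesgue_integral_def by simp
  also have "\<dots> = (LINT x|lebesgue. f x * indicator (box c d) x)"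
  proof (rule integral_cong_AE)
    show "(\<lambda>x. indicator (cbox c d) x *\<^sub>R f x) \<in> borel_measurable lebesgue"
      using fm by (intro borel_measurable_scaleR borel_measurable_indicator) auto
    show "(\<lambda>x. f x * indicator (box c d) x) \<in> borel_measurable lebesgue"
      using fm by (intro borel_measurable_times borel_measurable_indicator) (auto simp: measurable_completion)
    have "cbox c d - box c d \<in> null_sets lebesgue"
      using negligible_frontier_interval negligible_iff_null_sets by blast
    then have "AE x in lebesgue. x \<notin> cbox c d - box c d"
      by (rule AE_not_in)
    then show "AE x in lebesgue. indicator (cbox c d) x *\<^sub>R f x = f x * indicator (box c d) x"
      by eventually_elim (use box_subset_cbox in \<open>auto simp: indicator_def\<close>)
  qed
  also have "\<dots> = 0"
    using f orth cd by (rule integral_indicator_box_eq_0_if_orthogonal_test_funs)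
  finally show ?thesis .
qed

lemma One_cart_nth: "(One :: real^'n::finite) $ j = 1"
  by (metis one_index Cart_1)

lemma cube_corner_nth: "(x + \<delta> *\<^sub>R One :: real^'n::finite) $ j = x $ j + \<delta>"
  by (simp only: vector_add_component vector_scaleR_component One_cart_nth) simp

lemma cube_subset_ball:
  fixes x :: "real^'n::finite"
  assumes "0 \<le> \<delta>" "real CARD('n) * \<delta> < r"
  shows "cbox x (x + \<delta> *\<^sub>R One) \<subseteq> ball x r"
proof
  fix y assume "y \<in> cbox x (x + \<delta> *\<^sub>R One)"
  then have bounds: "x $ j \<le> y $ j \<and> y $ j \<le> x $ j + \<delta>" for j
    unfolding mem_box_cart cube_corner_nth by blast
  have "norm (y - x) \<le> (\<Sum>j\<in>UNIV. \<bar>(y - x) $ j\<bar>)"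
    by (rule norm_le_l1_cart)
  also have "\<dots> \<le> (\<Sum>j\<in>(UNIV::'n set). \<delta>)"
  proof (rule sum_mono)
    fix j
    show "\<bar>(y - x) $ j\<bar> \<le> \<delta>"
      using bounds[of j] by (simp add: abs_le_iff)
  qed
  also have "\<dots> < r"
    using assms by simp
  finally show "y \<in> ball x r"
    by (simp add: dist_norm norm_minus_commute)
qed

lemma AE_eq_0_if_integral_cbox_eq_0:
  fixes f :: "real^'n::finite \<Rightarrow> real"
  assumes "open \<Omega>" and f: "\<And>a b. f integrable_on cbox a b"
    and cbox_0: "\<And>c d. \<forall>j. c $ j < d $ j \<Longrightarrow> cbox c d \<subseteq> \<Omega> \<Longrightarrow> integral (cbox c d) f = 0"
  shows "AE x in lebesgue. x \<in> \<Omega> \<longrightarrow> f x = 0"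
proof -
  obtain N where "negligible N" and diff: "\<And>x e. \<lbrakk>x \<notin> N; 0 < e\<rbrakk> \<Longrightarrow>
      \<exists>d>0. \<forall>h. 0 < h \<and> h < d \<longrightarrow>
        norm (integral (cbox x (x + h *\<^sub>R One)) f /\<^sub>R h ^ DIM(real^'n) - f x) < e"
    using integrable_ccontinuous_explicit[of f] f by metis
  have f0: "f x = 0" if x: "x \<in> \<Omega>" "x \<notin> N" for x
  proof (rule ccontr)
    assume "f x \<noteq> 0"
    then obtain d where "d > 0" and d: "\<And>h. 0 < h \<and> h < d \<Longrightarrow>
        norm (integral (cbox x (x + h *\<^sub>R One)) f /\<^sub>R h ^ DIM(real^'n) - f x) < \<bar>f x\<bar>"
      using diff[OF x(2), of "\<bar>f x\<bar>"] by auto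
    obtain r where "r > 0" "ball x r \<subseteq> \<Omega>"
      using \<open>open \<Omega>\<close> x(1) openE by blast
    define \<delta> where "\<delta> = min (d / 2) (r / (2 * real CARD('n)))"
    have \<delta>: "0 < \<delta>" "\<delta> < d" "real CARD('n) * \<delta> < r"
      using \<open>d > 0\<close> \<open>r > 0\<close> by (auto simp: \<delta>_def min_def field_simps)
    have "\<forall>j. x $ j < (x + \<delta> *\<^sub>R One) $ j"
      using \<delta> unfolding cube_corner_nth by simp
    moreover have "cbox x (x + \<delta> *\<^sub>R One) \<subseteq> \<Omega>"
      using cube_subset_ball[of \<delta> r x] \<open>ball x r \<subseteq> \<Omega>\<close> \<delta> by auto
    ultimately have "integral (cbox x (x + \<delta> *\<^sub>R One)) f = 0"
      by (rule cbox_0)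
    then show False
      using d[of \<delta>] \<delta> by simp
  qed
  have "N \<in> null_sets lebesgue"
    using \<open>negligible N\<close> negligible_iff_null_sets by blast
  then have "AE x in lebesgue. x \<notin> N"
    by (rule AE_not_in)
  then show ?thesis
    by eventually_elim (use f0 in blast)
qed

lemma AE_eq_0_if_orthogonal_test_funs:
  fixes \<Omega> :: "(real^'n::finite) set" and h :: "real^'n \<Rightarrow> real"
  assumes "open \<Omega>" and \<Omega>: "\<Omega> \<in> sets lebesgue" and h: "integrable (lebesgue_on \<Omega>) h"
    and orth: "\<And>\<phi>. test_fun \<Omega> \<phi> \<Longrightarrow> (\<forall>x. \<bar>\<phi> x\<bar> \<le> 1) \<Longrightarrow> (LINT x|lebesgue_on \<Omega>. h x * \<phi> x) = 0"
  shows "AE x in lebesgue_on \<Omega>. h x = 0"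
proof -
  define f where "f x = indicator \<Omega> x * h x" for x
  have f: "integrable lebesgue f"
    using h integrable_restrict_space[of \<Omega> lebesgue h] \<Omega> unfolding f_def[abs_def] by simp
  have "(LINT x|lebesgue_on \<Omega>. h x * \<phi> x) = (LINT x|lebesgue. f x * \<phi> x)" for \<phi>
    using integral_restrict_space[of \<Omega> lebesgue "\<lambda>x. h x * \<phi> x"] \<Omega>
    by (simp add: f_def mult.assoc)
  then have "integral (cbox c d) f = 0" if "\<forall>j. c $ j < d $ j" "cbox c d \<subseteq> \<Omega>" for c d
    using orth by (intro integral_cbox_eq_0_if_orthogonal_test_funs[OF f _ that]) simp
  moreover have "f integrable_on cbox a b" for a b
    using integrable_mult_indicator[OF _ f, of "cbox a b"]
    by (intro set_lebesgue_integral_eq_integral(1))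
      (simp add: absolutely_integrable_on_def set_integrable_def)
  ultimately have "AE x in lebesgue. x \<in> \<Omega> \<longrightarrow> f x = 0"
    using AE_eq_0_if_integral_cbox_eq_0[OF \<open>open \<Omega>\<close>] by blast
  then show ?thesis
    using AE_restrict_space_iff[of \<Omega> lebesgue] \<Omega> by (simp add: f_def)
qed

lemma weak_grad_unique_AE:
  fixes \<Omega> :: "(real^'n::finite) set"
  assumes "open \<Omega>" and \<Omega>: "\<Omega> \<in> lmeasurable"
    and g1: "weak_grad \<Omega> u g1" and g2: "weak_grad \<Omega> u g2"
  shows "AE x in lebesgue_on \<Omega>. g1 x = g2 x"
proof -
  have fin: "finite_measure (lebesgue_on \<Omega>)"
    using \<Omega> by (rule finite_measure_lebesgue_on)
  have "AE x in lebesgue_on \<Omega>. g1 x $ i - g2 x $ i = 0" for i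
  proof (rule AE_eq_0_if_orthogonal_test_funs[OF \<open>open \<Omega>\<close>])
    have I: "integrable (lebesgue_on \<Omega>) (\<lambda>x. g x $ i)" if "weak_grad \<Omega> u g" for g
      using that finite_measure.square_integrable_imp_integrable[OF fin] unfolding weak_grad_def by blast
    show "\<Omega> \<in> sets lebesgue"
      using \<Omega> by auto
    show "integrable (lebesgue_on \<Omega>) (\<lambda>x. g1 x $ i - g2 x $ i)"
      using I[OF g1] I[OF g2] by auto
    fix \<phi> assume \<phi>: "test_fun \<Omega> \<phi>" and bound: "\<forall>x. \<bar>\<phi> x\<bar> \<le> 1"
    have "\<phi> \<in> borel_measurable (lebesgue_on \<Omega>)"
      using \<phi> \<Omega> continuous_on_Cinf continuous_imp_measurable_on_sets_lebesgue
      unfolding test_fun_def by (metis continuous_on_subset fmeasurableD top_greatest)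
    then have J: "integrable (lebesgue_on \<Omega>) (\<lambda>x. g x $ i * \<phi> x)" if "weak_grad \<Omega> u g" for g
      using I[OF that] that bound unfolding weak_grad_def
      by (intro Bochner_Integration.integrable_bound[OF I[OF that]])
        (auto simp: abs_mult intro!: mult_left_le)
    have "(LINT x|lebesgue_on \<Omega>. g x $ i * \<phi> x) = - (LINT x|lebesgue_on \<Omega>. u x * pd i \<phi> x)"
      if "weak_grad \<Omega> u g" for g
      using that \<phi> unfolding weak_grad_def by simp
    then show "(LINT x|lebesgue_on \<Omega>. (g1 x $ i - g2 x $ i) * \<phi> x) = 0"
      using J[OF g1] J[OF g2] g1 g2 by (simp add: left_diff_distrib)
  qed
  then have "AE x in lebesgue_on \<Omega>. \<forall>i\<in>UNIV. g1 x $ i = g2 x $ i"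
    by (intro eventually_ball_finite) auto
  then show ?thesis
    by eventually_elim (simp add: vec_eq_iff)
qed

lemma weak_grad_grad: "u \<in> H1 \<Omega> \<Longrightarrow> weak_grad \<Omega> u (grad \<Omega> u)"
  unfolding H1_def grad_def by (metis (mono_tags, lifting) mem_Collect_eq someI)

lemma weak_grad_scale:
  assumes "weak_grad \<Omega> u g"
  shows "weak_grad \<Omega> (\<lambda>x. t * u x) (\<lambda>x. t *\<^sub>R g x)"
  unfolding weak_grad_def
proof (intro allI conjI impI)
  fix i
  have g: "(\<lambda>x. g x $ i) \<in> borel_measurable (lebesgue_on \<Omega>)"
    "integrable (lebesgue_on \<Omega>) (\<lambda>x. (g x $ i)\<^sup>2)"
    "\<And>\<phi>. test_fun \<Omega> \<phi> \<Longrightarrow>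
       (LINT x|lebesgue_on \<Omega>. u x * pd i \<phi> x) = - (LINT x|lebesgue_on \<Omega>. g x $ i * \<phi> x)"
    using assms unfolding weak_grad_def by auto
  show "(\<lambda>x. (t *\<^sub>R g x) $ i) \<in> borel_measurable (lebesgue_on \<Omega>)"
    using g(1) by simp
  show "integrable (lebesgue_on \<Omega>) (\<lambda>x. ((t *\<^sub>R g x) $ i)\<^sup>2)"
    using integrable_mult_right[OF g(2), of "t\<^sup>2"] by (simp add: power_mult_distrib)
  fix \<phi> assume "test_fun \<Omega> \<phi>"
  then show "(LINT x|lebesgue_on \<Omega>. t * u x * pd i \<phi> x)
      = - (LINT x|lebesgue_on \<Omega>. (t *\<^sub>R g x) $ i * \<phi> x)"
    using g(3) by (simp add: mult.assoc)
qed

lemma H1_scale: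
  assumes u: "u \<in> H1 \<Omega>"
  shows "(\<lambda>x. t * u x) \<in> H1 \<Omega>"
proof -
  have "u \<in> borel_measurable (lebesgue_on \<Omega>)" and u2: "integrable (lebesgue_on \<Omega>) (\<lambda>x. (u x)\<^sup>2)"
    using u by (auto simp: H1_def)
  moreover have "weak_grad \<Omega> (\<lambda>x. t * u x) (\<lambda>x. t *\<^sub>R grad \<Omega> u x)"
    using u by (intro weak_grad_scale weak_grad_grad)
  moreover have "integrable (lebesgue_on \<Omega>) (\<lambda>x. t\<^sup>2 * (u x)\<^sup>2)"
    using u2 by (rule integrable_mult_right)
  ultimately show ?thesis
    unfolding H1_def by (auto simp: power_mult_distrib)
qed

lemma weak_grad_norm_sq_measurable:
  assumes "weak_grad \<Omega> u g"
  shows "(\<lambda>x. (norm (g x))\<^sup>2) \<in> borel_measurable (lebesgue_on \<Omega>)"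
proof -
  have "(\<lambda>x. \<Sum>i\<in>UNIV. (g x $ i)\<^sup>2) \<in> borel_measurable (lebesgue_on \<Omega>)"
    using assms unfolding weak_grad_def by (intro borel_measurable_sum borel_measurable_power) auto
  then show ?thesis
    by (simp add: norm_vec_def L2_set_def sum_nonneg)
qed

lemma EE_scale:
  fixes \<Omega> :: "(real^'n::finite) set"
  assumes "open \<Omega>" and "\<Omega> \<in> lmeasurable" and u: "u \<in> H1 \<Omega>"
  shows "EE \<Omega> (\<lambda>x. t * u x) = t\<^sup>2 * EE \<Omega> u"
proof -
  have g: "weak_grad \<Omega> u (grad \<Omega> u)"
    using u by (rule weak_grad_grad)
  have g_scaled: "weak_grad \<Omega> (\<lambda>x. t * u x) (grad \<Omega> (\<lambda>x. t * u x))"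
    using u by (intro weak_grad_grad H1_scale)
  have "AE x in lebesgue_on \<Omega>. grad \<Omega> (\<lambda>x. t * u x) x = t *\<^sub>R grad \<Omega> u x"
    using assms(1,2) g_scaled weak_grad_scale[OF g] by (rule weak_grad_unique_AE)
  then have "EE \<Omega> (\<lambda>x. t * u x) = (LINT x|lebesgue_on \<Omega>. t\<^sup>2 * (norm (grad \<Omega> u x))\<^sup>2)"
    unfolding EE_def
    using weak_grad_norm_sq_measurable[OF g] weak_grad_norm_sq_measurable[OF g_scaled]
    by (intro integral_cong_AE) (auto elim!: AE_mp simp: power_mult_distrib)
  then show ?thesis
    by (simp add: EE_def)
qed

lemma integral_weight_abs_powr_scale:
  fixes w u :: "'a \<Rightarrow> real"
  assumes "t > 0"
  shows "(LINT x|M. w x * \<bar>t * u x\<bar> powr r) = t powr r * (LINT x|M. w x * \<bar>u x\<bar> powr r)"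
proof -
  have "(\<lambda>x. w x * \<bar>t * u x\<bar> powr r) = (\<lambda>x. t powr r * (w x * \<bar>u x\<bar> powr r))"
    using assms by (simp add: abs_mult powr_mult mult.left_commute)
  then show ?thesis
    by simp
qed

lemma mult_one_minus_powr_mono:
  fixes r k y :: real
  assumes "r > 0" "0 < k" "k \<le> y" "y \<le> 1 / (1 + r)"
  shows "k * (1 - k) powr r \<le> y * (1 - y) powr r"
proof (rule DERIV_nonneg_imp_nondecreasing[OF \<open>k \<le> y\<close>])
  fix x assume x: "k \<le> x" "x \<le> y"
  have "x * (1 + r) \<le> y * (1 + r)"
    using x assms by (intro mult_right_mono) auto
  also have "\<dots> \<le> 1"
    using assms by (simp add: field_simps)
  finally have "x * (1 + r) \<le> 1" .
  moreover have "x < x * (1 + r)"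
    using x assms by simp
  ultimately have x1: "x < 1"
    by linarith
  have "((\<lambda>x. x * (1 - x) powr r) has_real_derivative
      (1 - x) powr r + x * (r * (1 - x) powr (r - 1) * (- 1))) (at x)"
    using x1 by (auto intro!: derivative_eq_intros)
  moreover have "(1 - x) powr r = (1 - x) powr (r - 1) * (1 - x)"
    using x1 powr_add[of "1 - x" "r - 1" 1] by simp
  then have "(1 - x) powr r + x * (r * (1 - x) powr (r - 1) * (- 1))
      = (1 - x) powr (r - 1) * (1 - x * (1 + r))"
    by (simp add: algebra_simps)
  ultimately show "\<exists>d. ((\<lambda>x. x * (1 - x) powr r) has_real_derivative d) (at x) \<and> 0 \<le> d"
    using \<open>x * (1 + r) \<le> 1\<close> by fastforce
qed

lemma Cpq_eq:
  assumes "p \<noteq> q"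
  shows "Cpq p q = q * (p - 2) / (2 * (p - q)) * (1 - q * (p - 2) / (2 * (p - q))) powr ((2 - q) / (p - 2))"
proof -
  have "1 - q * (p - 2) / (2 * (p - q)) = p * (2 - q) / (2 * (p - q))"
    using assms by (simp add: field_simps)
  then show ?thesis
    by (simp add: Cpq_def)
qed

lemma Cpq_bound_if_energy_nonpos:
  fixes p q e s :: real
  assumes pq: "1 < q" "q < 2" "2 < p" and "e > 0" "s > 0"
    and minus: "e > s * (p - q) / (p - 2)"
    and energy: "e / 2 - (e - s) / p - s / q \<le> 0"
  shows "Cpq p q * e powr ((p - q) / (p - 2)) \<le> s * (e - s) powr ((2 - q) / (p - 2))"
proof -
  define r where "r = (2 - q) / (p - 2)"
  define k where "k = q * (p - 2) / (2 * (p - q))"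
  define y where "y = s / e"
  have r: "r > 0" and k: "k > 0"
    using pq by (auto simp: r_def k_def)
  have exponent: "(p - q) / (p - 2) = 1 + r"
    using pq by (simp add: r_def field_simps)
  have "2 * p * q * (e / 2 - (e - s) / p - s / q) = q * (p - 2) * e - 2 * (p - q) * s"
    using pq by (simp add: field_simps)
  moreover have "2 * p * q * (e / 2 - (e - s) / p - s / q) \<le> 0"
    using energy pq by (simp add: mult_nonneg_nonpos)
  ultimately have "q * (p - 2) * e \<le> 2 * (p - q) * s"
    by linarith
  then have "k \<le> y"
    using pq \<open>e > 0\<close> unfolding k_def y_def
    by (simp add: divide_simps mult.commute mult.left_commute)
  moreover have "y \<le> 1 / (1 + r)"
  proof -
    have "s * (p - q) < e * (p - 2)"
      using minus pq by (simp add: field_simps)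
    then have "s / e \<le> (p - 2) / (p - q)"
      using \<open>e > 0\<close> pq by (simp add: divide_simps mult.commute)
    then show ?thesis
      unfolding y_def exponent[symmetric] by simp
  qed
  ultimately have mono: "k * (1 - k) powr r \<le> y * (1 - y) powr r"
    using mult_one_minus_powr_mono r k by blast
  have "Cpq p q = k * (1 - k) powr r"
    unfolding k_def r_def using pq by (intro Cpq_eq) auto
  then have "Cpq p q * e powr (1 + r) \<le> y * (1 - y) powr r * e powr (1 + r)"
    using mono by (simp add: mult_right_mono)
  also have "\<dots> = s * (e - s) powr r"
  proof -
    have "s * (p - q) / (p - 2) \<ge> s"
      using \<open>s > 0\<close> pq by (simp add: field_simps)
    then have "e - s = e * (1 - y)" "1 - y > 0"
      using \<open>e > 0\<close> minus by (auto simp: y_def field_simps)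
    then have "(e - s) powr r = e powr r * (1 - y) powr r"
      using \<open>e > 0\<close> by (simp add: powr_mult)
    moreover have "e powr (1 + r) = e * e powr r"
      using \<open>e > 0\<close> by (simp add: powr_add)
    ultimately show ?thesis
      using \<open>e > 0\<close> by (simp add: y_def field_simps)
  qed
  finally show ?thesis
    unfolding r_def exponent .
qed

lemma lambda0_le_rescaled:
  fixes \<Omega> :: "(real^'n::finite) set"
  assumes "open \<Omega>" "\<Omega> \<in> lmeasurable" and u: "u \<in> H1 \<Omega>"
    and pq: "0 < q" "q < 2" "2 < p"
    and E: "EE \<Omega> u > 0" and A: "AA \<Omega> a p u > 0" and B: "BB \<Omega> b q u > 0"
  shows "lambda0 \<Omega> a b p q \<le> ereal (Cpq p q / (BB \<Omega> b q u * AA \<Omega> a p u powr ((2 - q) / (p - 2)))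
                                      * EE \<Omega> u powr ((p - q) / (p - 2)))"
proof -
  define r where "r = (2 - q) / (p - 2)"
  define \<gamma> where "\<gamma> = 2 * (p - q) / (p - 2)"
  define K where "K = Cpq p q / (BB \<Omega> b q u * AA \<Omega> a p u powr r)"
  have C: "Cpq p q > 0" and \<gamma>: "\<gamma> > 0" and K: "K > 0"
    using pq A B by (auto simp: Cpq_def \<gamma>_def K_def)
  have \<gamma>_eq: "\<gamma> = q + p * r" "\<gamma> = 2 * ((p - q) / (p - 2))"
    using pq by (auto simp: \<gamma>_def r_def field_simps)
  \<comment> \<open>\<open>t u\<close> satisfies the constraint \<open>B A\<^sup>r = C\<^sub>p\<^sub>q\<close> in the definition of \<open>\<lambda>\<^sub>0\<close>\<close>
  define t where "t = K powr (1 / \<gamma>)"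
  have t: "t > 0" and t_powr: "t powr \<gamma> = K"
    using K \<gamma> by (auto simp: t_def powr_powr)
  define v where "v = (\<lambda>x. t * u x)"
  have Ev: "EE \<Omega> v = t powr 2 * EE \<Omega> u"
    using EE_scale[OF assms(1-3)] t by (simp add: v_def powr_realpow)
  have Av: "AA \<Omega> a p v = t powr p * AA \<Omega> a p u"
    using integral_weight_abs_powr_scale[OF t] by (simp add: v_def AA_def)
  have Bv: "BB \<Omega> b q v = t powr q * BB \<Omega> b q u"
    using integral_weight_abs_powr_scale[OF t] by (simp add: v_def BB_def)
  have "BB \<Omega> b q v * AA \<Omega> a p v powr r = t powr (q + p * r) * (BB \<Omega> b q u * AA \<Omega> a p u powr r)"
    using t A by (simp add: Av Bv powr_mult powr_powr powr_add)
  also have "\<dots> = Cpq p q"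
    using A B by (simp add: \<gamma>_eq(1)[symmetric] t_powr K_def)
  finally have "BB \<Omega> b q v * AA \<Omega> a p v powr r / Cpq p q = 1"
    using C by simp
  moreover have "v \<in> H1 \<Omega>"
    unfolding v_def using u by (rule H1_scale)
  moreover have "EE \<Omega> v > 0" "AA \<Omega> a p v > 0" "BB \<Omega> b q v > 0"
    using E A B t by (simp_all add: Ev Av Bv)
  ultimately have "lambda0 \<Omega> a b p q \<le> ereal (EE \<Omega> v powr ((p - q) / (p - 2)))"
    unfolding lambda0_def r_def by (intro Inf_lower) blast
  also have "EE \<Omega> v powr ((p - q) / (p - 2)) = (t powr 2) powr ((p - q) / (p - 2)) * EE \<Omega> u powr ((p - q) / (p - 2))"
    using t E by (simp add: Ev powr_mult)
  also have "(t powr 2) powr ((p - q) / (p - 2)) = K"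
    by (simp only: powr_powr \<gamma>_eq(2)[symmetric] t_powr)
  finally show ?thesis
    by (simp add: K_def r_def)
qed

lemma energy_pos_if_Nehari_nonpos:
  fixes p q lam E A B :: real
  assumes pq: "1 < q" "q < 2" "2 < p" and "lam > 0" "E \<ge> 0" "B \<le> 0"
    and Nehari: "E = A + lam * B" and minus: "E > lam * (p - q) / (p - 2) * B"
  shows "E / 2 - A / p - lam / q * B > 0"
proof -
  have "E / 2 - A / p - lam / q * B = (q * (p - 2) * E - 2 * (p - q) * (lam * B)) / (2 * p * q)"
    using pq unfolding Nehari by (simp add: field_simps)
  moreover have "q * (p - 2) * E - 2 * (p - q) * (lam * B) > 0"
  proof (cases "B = 0")
    case True
    then show ?thesis
      using minus pq by simp
  next
    case False
    then have "lam * B < 0"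
      using \<open>B \<le> 0\<close> \<open>lam > 0\<close> by (simp add: mult_pos_neg)
    then have "2 * (p - q) * (lam * B) < 0"
      using pq by (simp add: mult_pos_neg)
    moreover have "q * (p - 2) * E \<ge> 0"
      using pq \<open>E \<ge> 0\<close> by simp
    ultimately show ?thesis
      by linarith
  qed
  ultimately show ?thesis
    using pq by simp
qed

lemma energy_pos_if_Nehari_minus:
  fixes p q lam E A B :: real
  assumes pq: "1 < q" "q < 2" "2 < p" and "lam > 0" "E \<ge> 0"
    and Nehari: "E = A + lam * B" and minus: "E > lam * (p - q) / (p - 2) * B"
    and lam_small: "B > 0 \<Longrightarrow> A > 0 \<Longrightarrow> E > 0 \<Longrightarrow>
        lam * B * A powr ((2 - q) / (p - 2)) < Cpq p q * E powr ((p - q) / (p - 2))"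
  shows "E / 2 - A / p - lam / q * B > 0"
proof (cases "B > 0")
  case False
  then show ?thesis
    using energy_pos_if_Nehari_nonpos[OF pq \<open>lam > 0\<close> \<open>E \<ge> 0\<close> _ Nehari minus] by simp
next
  case True
  have "lam * (p - q) / (p - 2) * B \<ge> lam * B"
    using True pq \<open>lam > 0\<close> by (simp add: field_simps)
  moreover have "lam * B > 0"
    using True \<open>lam > 0\<close> by simp
  ultimately have "E > lam * B" "E > 0"
    using minus by linarith+
  show ?thesis
  proof (rule ccontr)
    assume "\<not> ?thesis"
    then have "E / 2 - (E - lam * B) / p - lam * B / q \<le> 0"
      by (simp add: Nehari)
    moreover have "E > lam * B * (p - q) / (p - 2)"
      using minus by (simp add: mult.commute mult.left_commute)
    ultimately have "Cpq p q * E powr ((p - q) / (p - 2)) \<le> lam * B * A powr ((2 - q) / (p - 2))"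
      using Cpq_bound_if_energy_nonpos[OF pq \<open>E > 0\<close> \<open>lam * B > 0\<close>] by (simp add: Nehari)
    then show False
      using lam_small True \<open>E > lam * B\<close> \<open>E > 0\<close> Nehari by simp
  qed
qed

lemma open_lmeasurable_if_smooth_bounded_domain:
  assumes "smooth_bounded_domain \<Omega>"
  shows "open \<Omega>" "\<Omega> \<in> lmeasurable"
proof -
  show "open \<Omega>"
    using assms by (simp add: smooth_bounded_domain_def)
  moreover have "bounded \<Omega>"
    using assms by (simp add: smooth_bounded_domain_def)
  ultimately show "\<Omega> \<in> lmeasurable"
    using lmeasurable_interior interior_open by metis
qed

text \<open>
  Only the structure of \<open>\<Omega>\<close> as a bounded open set and the ranges of \<open>p\<close>, \<open>q\<close> and \<open>\<lambda>\<close>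
  are needed; the remaining hypotheses matter elsewhere in the paper.
\<close>

theorem lemma2p7:
  fixes \<Omega> :: "(real^'n::finite) set"
    and a b :: "real^'n \<Rightarrow> real"
    and p q \<alpha> lam :: real
  assumes "CARD('n) \<ge> 2"
    and "smooth_bounded_domain \<Omega>"
    and "1 < q" and "q < 2" and "2 < p"
    and "CARD('n) \<ge> 3 \<longrightarrow> p < 2 * real CARD('n) / (real CARD('n) - 2)"
    and "0 < \<alpha>" and "\<alpha> < 1"
    and "holder_on \<alpha> (closure \<Omega>) a" and "holder_on \<alpha> (closure \<Omega>) b"
    and "(LINT x|lebesgue_on \<Omega>. a x) < 0 \<or> (LINT x|lebesgue_on \<Omega>. b x) < 0"
    and "0 < lam" and "ereal lam < lambda0 \<Omega> a b p q"
  shows "\<forall>u \<in> Nehari_minus \<Omega> a b p q lam. II \<Omega> a b p q lam u > 0"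
proof
  fix u assume "u \<in> Nehari_minus \<Omega> a b p q lam"
  then have u: "u \<in> H1 \<Omega>" "EE \<Omega> u = AA \<Omega> a p u + lam * BB \<Omega> b q u"
      "EE \<Omega> u > lam * (p - q) / (p - 2) * BB \<Omega> b q u"
    by (auto simp: Nehari_minus_def Nehari_def)
  note \<Omega> = open_lmeasurable_if_smooth_bounded_domain[OF assms(2)]
  have "EE \<Omega> u \<ge> 0"
    unfolding EE_def by (rule integral_nonneg_AE) auto
  moreover have "lam * BB \<Omega> b q u * AA \<Omega> a p u powr ((2 - q) / (p - 2))
      < Cpq p q * EE \<Omega> u powr ((p - q) / (p - 2))"
    if "BB \<Omega> b q u > 0" "AA \<Omega> a p u > 0" "EE \<Omega> u > 0"
  proof -
    have "0 < q"
      using assms(3) by simp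
    from assms(13) lambda0_le_rescaled[OF \<Omega> u(1) this assms(4,5) that(3,2,1)]
    have "ereal lam < ereal (Cpq p q / (BB \<Omega> b q u * AA \<Omega> a p u powr ((2 - q) / (p - 2)))
                             * EE \<Omega> u powr ((p - q) / (p - 2)))"
      by (rule less_le_trans)
    then show ?thesis
      using that by (simp add: field_simps)
  qed
  ultimately show "II \<Omega> a b p q lam u > 0"
    unfolding II_def by (rule energy_pos_if_Nehari_minus[OF assms(3-5,12) _ u(2,3)])
qed

end
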